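(* Let $m,n\in\mathbb N$, $M_A=M_m(\mathbb C)$, $M_B=M_n(\mathbb C)$, let $U_A\in M_A$, $U_B\in M_B$ be unitary matrices, and let $\{e_{ij}\}$ be the matrix units of $M_m(\mathbb C)$. For a linear map $\psi:M_A\to M_B$ let $C^U_\psi:=\sum_{i,j=1}^m e_{ij}\otimes\psi(U_Ae_{ij})\in M_A\otimes M_B$ (the Choi $U$-matrix). Then $\psi$ is $(U_A,U_B)$-CP if and only if $C^U_\psi$ is $I_A\otimes U_B$-positive, i.e. $(I_m\otimes U_B^* )C^U_\psi$ is positive semidefinite.
   Context: For $k\in\mathbb N$ and a unitary $U$, write $U^k=\mathrm{diag}(U,\dots,U)$. A linear map $\psi:M_A\to M_B$ is $(U_A,U_B)$-CP if for every $k\in\mathbb N$ and every $V=[V_{ij}]\in M_k(M_A)$ with $(U_A^k)^*V\ge0$, one has $(U_B^k)^*[\psi(V_{ij})]\ge0$. $M_A\otimes M_B$ is identified with block matrices $M_m(M_n(\mathbb C))$. *)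

theory Defs
  imports "Jordan_Normal_Form.Matrix"
begin

definition adj :: "complex mat \<Rightarrow> complex mat" where
  "adj A = mat (dim_col A) (dim_row A) (\<lambda>(i,j). cnj (A $$ (j,i)))"

definition unitary_mat :: "nat \<Rightarrow> complex mat \<Rightarrow> bool" where
  "unitary_mat n U \<longleftrightarrow> U \<in> carrier_mat n n \<and> U * adj U = 1\<^sub>m n \<and> adj U * U = 1\<^sub>m n"

definition psd :: "nat \<Rightarrow> complex mat \<Rightarrow> bool" where
  "psd N A \<longleftrightarrow> A \<in> carrier_mat N N \<and>
     (\<forall>v \<in> carrier_vec N. let q = map_vec cnj v \<bullet> (A *\<^sub>v v) in Im q = 0 \<and> Re q \<ge> 0)"

text \<open>Block matrix [F i j] in M_k(M_d), identified with a (k*d) x (k*d) matrix.\<close>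
definition block_mat :: "nat \<Rightarrow> nat \<Rightarrow> (nat \<Rightarrow> nat \<Rightarrow> complex mat) \<Rightarrow> complex mat" where
  "block_mat k d F = mat (k*d) (k*d) (\<lambda>(r,c). F (r div d) (c div d) $$ (r mod d, c mod d))"

definition diag_rep :: "nat \<Rightarrow> nat \<Rightarrow> complex mat \<Rightarrow> complex mat" where
  "diag_rep k d U = block_mat k d (\<lambda>i j. if i = j then U else 0\<^sub>m d d)"

definition kron :: "nat \<Rightarrow> nat \<Rightarrow> complex mat \<Rightarrow> complex mat \<Rightarrow> complex mat" where
  "kron m n A B = mat (m*n) (m*n) (\<lambda>(r,c). A $$ (r div n, c div n) * B $$ (r mod n, c mod n))"

definition mat_unit :: "nat \<Rightarrow> nat \<Rightarrow> nat \<Rightarrow> complex mat" where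
  "mat_unit m i j = mat m m (\<lambda>(r,c). if r = i \<and> c = j then 1 else 0)"

definition lin_map :: "nat \<Rightarrow> nat \<Rightarrow> (complex mat \<Rightarrow> complex mat) \<Rightarrow> bool" where
  "lin_map m n \<psi> \<longleftrightarrow>
     (\<forall>A \<in> carrier_mat m m. \<psi> A \<in> carrier_mat n n) \<and>
     (\<forall>A \<in> carrier_mat m m. \<forall>B \<in> carrier_mat m m. \<psi> (A + B) = \<psi> A + \<psi> B) \<and>
     (\<forall>c. \<forall>A \<in> carrier_mat m m. \<psi> (c \<cdot>\<^sub>m A) = c \<cdot>\<^sub>m \<psi> A)"

definition UCP :: "nat \<Rightarrow> nat \<Rightarrow> complex mat \<Rightarrow> complex mat \<Rightarrow> (complex mat \<Rightarrow> complex mat) \<Rightarrow> bool" where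
  "UCP m n UA UB \<psi> \<longleftrightarrow>
     (\<forall>k \<ge> 1. \<forall>V :: nat \<Rightarrow> nat \<Rightarrow> complex mat.
        (\<forall>i<k. \<forall>j<k. V i j \<in> carrier_mat m m) \<longrightarrow>
        psd (k*m) (adj (diag_rep k m UA) * block_mat k m V) \<longrightarrow>
        psd (k*n) (adj (diag_rep k n UB) * block_mat k n (\<lambda>i j. \<psi> (V i j))))"

definition choi_U :: "nat \<Rightarrow> nat \<Rightarrow> complex mat \<Rightarrow> (complex mat \<Rightarrow> complex mat) \<Rightarrow> complex mat" where
  "choi_U m n UA \<psi> = mat (m*n) (m*n) (\<lambda>rc.
     \<Sum>i<m. \<Sum>j<m. kron m n (mat_unit m i j) (\<psi> (UA * mat_unit m i j)) $$ rc)"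

end

theory Submission
  imports Defs
begin

(* Conjugating by the unitaries turns (U_A,U_B)-complete positivity of \<psi> into ordinary complete
   positivity of \<phi> X = adj U_B * \<psi> (U_A * X), and (I \<otimes> adj U_B) C^U_\<psi> is exactly the Choi
   matrix [\<phi>(e_ij)] of \<phi>. So the theorem is Choi's theorem for \<phi>. The Choi matrix is the image
   of the positive block matrix [e_ij] under \<phi>, which gives one direction. Conversely, a Gram
   decomposition C = \<Sum>_l g_l g_l^* of a positive Choi matrix writes every block matrix [\<phi>(W_ab)]
   as a sum of congruences K_l^* W K_l with block-diagonal K_l, and these are positive whenever
   W is. *)

(* Positivity is developed for matrices given as index functions, which keeps the sum
   manipulations free of carrier side conditions; psd_iff_psd_fun is the bridge to psd. *)

definition sesq_form :: "nat \<Rightarrow> (nat \<Rightarrow> nat \<Rightarrow> complex) \<Rightarrow> (nat \<Rightarrow> complex) \<Rightarrow> (nat \<Rightarrow> complex) \<Rightarrow> complex" where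
  "sesq_form N A x y = (\<Sum>i<N. \<Sum>j<N. cnj (x i) * A i j * y j)"

definition psd_fun :: "nat \<Rightarrow> (nat \<Rightarrow> nat \<Rightarrow> complex) \<Rightarrow> bool" where
  "psd_fun N A \<longleftrightarrow> (\<forall>y. 0 \<le> sesq_form N A y y)"

definition kdelta :: "nat \<Rightarrow> nat \<Rightarrow> complex" where
  "kdelta r i = (if i = r then 1 else 0)"

lemma complex_nonneg_iff: "0 \<le> (z::complex) \<longleftrightarrow> Im z = 0 \<and> Re z \<ge> 0"
  by (auto simp: less_eq_complex_def)

lemma sesq_form_add_left: "sesq_form N A (\<lambda>i. x i + z i) y = sesq_form N A x y + sesq_form N A z y"
  unfolding sesq_form_def by (simp add: ring_distribs sum.distrib)

lemma sesq_form_add_right: "sesq_form N A x (\<lambda>i. y i + z i) = sesq_form N A x y + sesq_form N A x z"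
  unfolding sesq_form_def by (simp add: ring_distribs sum.distrib)

lemma sesq_form_scale_left: "sesq_form N A (\<lambda>i. t * x i) y = cnj t * sesq_form N A x y"
  unfolding sesq_form_def by (simp add: sum_distrib_left mult_ac)

lemma sesq_form_scale_right: "sesq_form N A x (\<lambda>i. t * y i) = t * sesq_form N A x y"
  unfolding sesq_form_def by (simp add: sum_distrib_left mult_ac)

lemmas sesq_form_linear =
  sesq_form_add_left sesq_form_add_right sesq_form_scale_left sesq_form_scale_right

lemma sesq_form_kdelta_left:
  assumes "r < N"
  shows "sesq_form N A (kdelta r) y = (\<Sum>j<N. A r j * y j)"
proof -
  have "(\<Sum>j<N. cnj (kdelta r i) * A i j * y j) = (if i = r then \<Sum>j<N. A r j * y j else 0)" for i
    by (simp add: kdelta_def)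
  then show ?thesis
    using assms by (simp add: sesq_form_def)
qed

lemma sesq_form_kdelta_right: "r < N \<Longrightarrow> sesq_form N A x (kdelta r) = (\<Sum>i<N. cnj (x i) * A i r)"
  unfolding sesq_form_def kdelta_def by (simp add: if_distrib cong: if_cong)

lemma sesq_form_kdelta: "r < N \<Longrightarrow> s < N \<Longrightarrow> sesq_form N A (kdelta r) (kdelta s) = A r s"
  by (simp add: sesq_form_kdelta_left kdelta_def if_distrib cong: if_cong)

lemma sesq_form_diff_matrix:
  "sesq_form N (\<lambda>i j. A i j - B i j) x y = sesq_form N A x y - sesq_form N B x y"
  unfolding sesq_form_def by (simp add: algebra_simps sum_subtractf)

lemma sesq_form_sum_matrix:
  "sesq_form N (\<lambda>i j. \<Sum>l\<in>L. M l i j) x y = (\<Sum>l\<in>L. sesq_form N (M l) x y)"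
  unfolding sesq_form_def sum_distrib_left sum_distrib_right
  by (subst sum.swap) (simp add: sum.swap[of _ _ L])

lemma sesq_form_product:
  "sesq_form N (\<lambda>i j. u i * c * v j) x y = (\<Sum>i<N. cnj (x i) * u i) * c * (\<Sum>j<N. v j * y j)"
  unfolding sesq_form_def by (simp add: sum_distrib_left sum_distrib_right mult_ac)

lemma sesq_form_congruence:
  "sesq_form N (\<lambda>i j. \<Sum>p<M. \<Sum>q<M. cnj (K p i) * A p q * K q j) x y =
   sesq_form M A (\<lambda>p. \<Sum>i<N. K p i * x i) (\<lambda>q. \<Sum>j<N. K q j * y j)"
  unfolding sesq_form_sum_matrix sesq_form_product
  by (simp add: sesq_form_def mult.commute)

lemma psd_fun_cong:
  assumes "\<And>i j. i < N \<Longrightarrow> j < N \<Longrightarrow> A i j = B i j"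
  shows "psd_fun N A \<longleftrightarrow> psd_fun N B"
proof -
  have "sesq_form N A y y = sesq_form N B y y" for y
    unfolding sesq_form_def by (intro sum.cong refl) (simp add: assms)
  then show ?thesis
    unfolding psd_fun_def by simp
qed

lemma psd_fun_diag_nonneg: "psd_fun N A \<Longrightarrow> r < N \<Longrightarrow> 0 \<le> A r r"
  unfolding psd_fun_def using sesq_form_kdelta[of r N r A] by metis

lemma psd_fun_hermitian:
  assumes A: "psd_fun N A" and i: "i < N" and j: "j < N"
  shows "A j i = cnj (A i j)"
proof -
  have real: "Im (sesq_form N A y y) = 0" for y
    using A unfolding psd_fun_def complex_nonneg_iff by blast
  have "Im (A i i) = 0" "Im (A j j) = 0"
    using real[of "kdelta i"] real[of "kdelta j"] by (simp_all add: sesq_form_kdelta i j)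
  moreover have "sesq_form N A (\<lambda>l. kdelta i l + kdelta j l) (\<lambda>l. kdelta i l + kdelta j l)
      = A i i + A i j + A j i + A j j"
    by (simp add: sesq_form_linear sesq_form_kdelta i j)
  moreover have "sesq_form N A (\<lambda>l. kdelta i l + \<i> * kdelta j l) (\<lambda>l. kdelta i l + \<i> * kdelta j l)
      = A i i + \<i> * A i j - \<i> * A j i + A j j"
    by (simp add: sesq_form_linear sesq_form_kdelta i j)
  ultimately have "Im (A i j) + Im (A j i) = 0" "Re (A i j) - Re (A j i) = 0"
    using real[of "\<lambda>l. kdelta i l + kdelta j l"] real[of "\<lambda>l. kdelta i l + \<i> * kdelta j l"]
    by simp_all
  then show ?thesis
    by (simp add: complex_eq_iff)
qed

lemma psd_fun_zero_diag_row:
  assumes A: "psd_fun N A" and r: "r < N" and j: "j < N" and diag: "A r r = 0"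
  shows "A r j = 0"
proof (rule ccontr)
  assume nz: "A r j \<noteq> 0"
  define w where "w = A r j"
  have Ajr: "A j r = cnj w"
    using psd_fun_hermitian[OF A r j] w_def by simp
  have bound: "2 * s * (cmod w)\<^sup>2 \<le> Re (A j j)" for s :: real
  proof -
    define t where "t = - complex_of_real s * w"
    have "sesq_form N A (\<lambda>l. kdelta j l + t * kdelta r l) (\<lambda>l. kdelta j l + t * kdelta r l)
        = A j j + t * A j r + cnj t * A r j + cnj t * t * A r r"
      by (simp add: sesq_form_linear sesq_form_kdelta r j algebra_simps)
    also have "\<dots> = A j j - complex_of_real (2 * s * (cmod w)\<^sup>2)"
      using diag Ajr unfolding t_def w_def by (simp add: algebra_simps flip: complex_norm_square)
    finally show ?thesis
      using A unfolding psd_fun_def complex_nonneg_iff by (metis minus_complex.sel(1) Re_complex_of_real diff_ge_0_iff_ge)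
  qed
  have "(cmod w)\<^sup>2 > 0"
    using nz w_def by simp
  then have "2 * ((Re (A j j) + 1) / (2 * (cmod w)\<^sup>2)) * (cmod w)\<^sup>2 = Re (A j j) + 1"
    by (simp add: field_simps)
  then show False
    using bound[of "(Re (A j j) + 1) / (2 * (cmod w)\<^sup>2)"] by simp
qed

lemma psd_fun_rank1: "psd_fun N (\<lambda>i j. u i * cnj (u j))"
proof -
  have square: "0 \<le> cnj z * z" for z :: complex
    by (simp add: less_eq_complex_def)
  have eq: "sesq_form N (\<lambda>i j. u i * cnj (u j)) y y = cnj (\<Sum>i<N. cnj (u i) * y i) * (\<Sum>i<N. cnj (u i) * y i)" for y
    using sesq_form_product[of N u 1 "\<lambda>j. cnj (u j)" y y] by (simp add: mult.commute)
  show ?thesis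
    unfolding psd_fun_def eq by (intro allI square)
qed

lemma psd_fun_sum:
  assumes "\<And>l. l \<in> L \<Longrightarrow> psd_fun N (M l)"
  shows "psd_fun N (\<lambda>i j. \<Sum>l\<in>L. M l i j)"
  using assms unfolding psd_fun_def sesq_form_sum_matrix by (simp add: sum_nonneg)

lemma psd_fun_congruence:
  "psd_fun M A \<Longrightarrow> psd_fun N (\<lambda>i j. \<Sum>p<M. \<Sum>q<M. cnj (K p i) * A p q * K q j)"
  unfolding psd_fun_def sesq_form_congruence by blast

(* If A r r = 0 this is the zero vector (x / 0 = 0 in Isabelle); positivity then forces
   row and column r of A to vanish, so pivot_col_outer still holds. *)
definition pivot_col :: "(nat \<Rightarrow> nat \<Rightarrow> complex) \<Rightarrow> nat \<Rightarrow> nat \<Rightarrow> complex" where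
  "pivot_col A r i = A i r / complex_of_real (sqrt (Re (A r r)))"

lemma pivot_col_outer:
  assumes A: "psd_fun N A" and r: "r < N" and i: "i < N"
  shows "pivot_col A r i * cnj (pivot_col A r r) = A i r"
proof (cases "A r r = 0")
  case True
  then have "A i r = 0"
    using psd_fun_zero_diag_row[OF A r i] psd_fun_hermitian[OF A r i] by simp
  then show ?thesis
    by (simp add: pivot_col_def)
next
  case False
  define d where "d = complex_of_real (sqrt (Re (A r r)))"
  have "Im (A r r) = 0" "Re (A r r) \<ge> 0"
    using psd_fun_diag_nonneg[OF A r] by (simp_all add: complex_nonneg_iff)
  then have dd: "d * d = A r r"
    unfolding d_def by (simp add: complex_eq_iff flip: of_real_mult)
  then have "d \<noteq> 0"
    using False by auto
  have "pivot_col A r i * cnj (pivot_col A r r) = A i r / d * cnj (d * d / d)"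
    unfolding pivot_col_def d_def[symmetric] dd ..
  also have "\<dots> = A i r"
    using \<open>d \<noteq> 0\<close> by (simp add: d_def)
  finally show ?thesis .
qed

lemma psd_fun_schur_complement:
  assumes A: "psd_fun N A" and r: "r < N"
  shows "psd_fun N (\<lambda>i j. A i j - pivot_col A r i * cnj (pivot_col A r j))"
proof (cases "A r r = 0")
  case True
  then show ?thesis
    using A by (simp add: pivot_col_def)
next
  case False
  define d where "d = A r r"
  define sq where "sq = complex_of_real (sqrt (Re d))"
  have "Im d = 0" "Re d \<ge> 0"
    using psd_fun_diag_nonneg[OF A r] by (simp_all add: d_def complex_nonneg_iff)
  then have d_real: "cnj d = d" and sq_sq: "sq * sq = d"
    unfolding sq_def by (simp_all add: complex_eq_iff flip: of_real_mult)
  have cnj_sq: "cnj sq = sq"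
    unfolding sq_def by simp
  show ?thesis
    unfolding psd_fun_def
  proof
    fix y
    define w where "w = (\<Sum>j<N. A r j * y j)"
    define t where "t = - w / d"
    have form_row: "sesq_form N A (kdelta r) y = w"
      unfolding w_def using sesq_form_kdelta_left[OF r] .
    have form_col: "sesq_form N A y (kdelta r) = cnj w"
      unfolding w_def sesq_form_kdelta_right[OF r] using psd_fun_hermitian[OF A _ r]
      by (simp add: mult.commute)
    have col_sum: "(\<Sum>j<N. cnj (pivot_col A r j) * y j) = w / sq"
      unfolding w_def pivot_col_def sq_def[symmetric] d_def[symmetric]
      by (simp add: sum_divide_distrib cnj_sq psd_fun_hermitian[OF A r])
    have row_sum: "(\<Sum>i<N. cnj (y i) * pivot_col A r i) = cnj (w / sq)"
      using arg_cong[of _ _ cnj, OF col_sum] by (simp add: mult.commute)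
    have "sesq_form N (\<lambda>i j. A i j - pivot_col A r i * cnj (pivot_col A r j)) y y
        = sesq_form N A y y - cnj (w / sq) * (w / sq)"
      using sesq_form_product[of N "pivot_col A r" 1 "\<lambda>j. cnj (pivot_col A r j)" y y]
      by (simp only: sesq_form_diff_matrix col_sum row_sum mult_1_right)
    also have "\<dots> = sesq_form N A y y + t * cnj w + cnj t * w + cnj t * t * d"
      using cnj_sq sq_sq d_real False unfolding t_def d_def by (simp add: field_simps)
    also have "\<dots> = sesq_form N A (\<lambda>l. y l + t * kdelta r l) (\<lambda>l. y l + t * kdelta r l)"
      by (simp add: sesq_form_linear sesq_form_kdelta r form_row form_col d_def algebra_simps)
    finally show "0 \<le> sesq_form N (\<lambda>i j. A i j - pivot_col A r i * cnj (pivot_col A r j)) y y"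
      using A unfolding psd_fun_def by simp
  qed
qed

(* Cholesky-style elimination: the Schur complement at pivot n also clears row and column n. *)
lemma psd_fun_gram_tail:
  assumes "r \<le> N" and "psd_fun N A" and "\<forall>i<N. \<forall>j<N. (i < r \<or> j < r) \<longrightarrow> A i j = 0"
  shows "\<exists>c. \<forall>i<N. \<forall>j<N. A i j = (\<Sum>l\<in>{r..<N}. c l i * cnj (c l j))"
  using assms
proof (induction r arbitrary: A rule: inc_induct)
  case base
  then show ?case by auto
next
  case (step n)
  define v where "v = pivot_col A n"
  define A' where "A' i j = A i j - v i * cnj (v j)" for i j
  have v_zero: "v i = 0" if "i < n" for i
    using step.prems(2) that step.hyps(2) unfolding v_def pivot_col_def by auto
  have "psd_fun N A'"
    unfolding A'_def v_def using psd_fun_schur_complement[OF step.prems(1) step.hyps(2)] .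
  moreover have "\<forall>i<N. \<forall>j<N. (i < Suc n \<or> j < Suc n) \<longrightarrow> A' i j = 0"
  proof (intro allI impI)
    fix i j assume i: "i < N" and j: "j < N" and ij: "i < Suc n \<or> j < Suc n"
    have col: "v l * cnj (v n) = A l n" if "l < N" for l
      unfolding v_def using pivot_col_outer[OF step.prems(1) step.hyps(2) that] .
    consider "i < n \<or> j < n" | "i = n" | "j = n"
      using ij by linarith
    then show "A' i j = 0"
    proof cases
      case 1
      then show ?thesis
        using step.prems(2) i j v_zero unfolding A'_def by auto
    next
      case 2
      then show ?thesis
        using arg_cong[of _ _ cnj, OF col[OF j]] psd_fun_hermitian[OF step.prems(1) j step.hyps(2)]
        unfolding A'_def by (simp add: mult.commute)
    next
      case 3
      then show ?thesis
        using col[OF i] unfolding A'_def by simp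
    qed
  qed
  ultimately obtain c where c: "\<forall>i<N. \<forall>j<N. A' i j = (\<Sum>l\<in>{Suc n..<N}. c l i * cnj (c l j))"
    using step.IH by blast
  have "{n..<N} = insert n {Suc n..<N}"
    using step.hyps(2) by auto
  then have "(\<Sum>l\<in>{n..<N}. (c(n := v)) l i * cnj ((c(n := v)) l j))
      = v i * cnj (v j) + (\<Sum>l\<in>{Suc n..<N}. c l i * cnj (c l j))" for i j
    by simp
  then show ?case
    using c unfolding A'_def by (intro exI[of _ "c(n := v)"]) (simp add: algebra_simps)
qed

lemma psd_fun_gram:
  "psd_fun N A \<Longrightarrow> \<exists>c. \<forall>i<N. \<forall>j<N. A i j = (\<Sum>l<N. c l i * cnj (c l j))"
  using psd_fun_gram_tail[of 0 N A] by (simp add: atLeast0LessThan)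

lemma block_index_less: "p < m \<Longrightarrow> s < n \<Longrightarrow> p * n + s < m * (n::nat)"
proof -
  assume "p < m" "s < n"
  then have "p * n + s < Suc p * n"
    by simp
  also have "\<dots> \<le> m * n"
    using \<open>p < m\<close> by (intro mult_right_mono) auto
  finally show ?thesis .
qed

lemma block_pos_less:
  fixes r k d :: nat
  assumes "r < k * d"
  shows "r div d < k" and "r mod d < d"
proof -
  show "r div d < k"
    using assms by (simp add: less_mult_imp_div_less)
  have "0 < d"
    using assms by (cases d) auto
  then show "r mod d < d"
    by simp
qed

lemma sum_split_blocks:
  fixes f :: "nat \<Rightarrow> 'a::comm_monoid_add"
  shows "(\<Sum>r<k * d. f r) = (\<Sum>a<k. \<Sum>s<d. f (a * d + s))"
proof -
  have "(\<Sum>r<k * d. f r) = (\<Sum>a<k. \<Sum>r\<in>{a * d..<a * d + d}. f r)"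
    by (rule sum.nat_group[symmetric])
  also have "\<dots> = (\<Sum>a<k. \<Sum>s<d. f (a * d + s))"
    by (simp add: sum.atLeastLessThan_shift_0 atLeast0LessThan comp_def)
  finally show ?thesis .
qed

lemma sum_block_select:
  fixes f :: "nat \<Rightarrow> 'a::comm_monoid_add"
  assumes "a < k"
  shows "(\<Sum>r<k * d. if r div d = a then f r else 0) = (\<Sum>s<d. f (a * d + s))"
proof -
  have "(\<Sum>s<d. if (b * d + s) div d = a then f (b * d + s) else 0)
      = (if b = a then \<Sum>s<d. f (a * d + s) else 0)" for b
    by (auto intro!: sum.neutral)
  then show ?thesis
    using assms by (simp add: sum_split_blocks)
qed

(* The contracted matrix is [\<phi>(W_ab)] for the map \<phi> with Choi matrix C. With C = \<Sum>_l g_l g_l^*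
   it is \<Sum>_l K_l^* W K_l, where K_l = diag(G_l,...,G_l) and G_l (p, t) = cnj (g_l (p n + t)). *)
lemma psd_fun_block_contraction:
  assumes C: "psd_fun (m * n) C" and W: "psd_fun (k * m) W"
  shows "psd_fun (k * n) (\<lambda>r c. \<Sum>p<m. \<Sum>q<m.
           W (r div n * m + p) (c div n * m + q) * C (p * n + r mod n) (q * n + c mod n))"
proof -
  obtain g where g: "\<forall>i<m*n. \<forall>j<m*n. C i j = (\<Sum>l<m*n. g l i * cnj (g l j))"
    using psd_fun_gram[OF C] by blast
  define K where "K l P R = (if P div m = R div n then cnj (g l (P mod m * n + R mod n)) else 0)" for l P R
  have entry: "(\<Sum>p<m. \<Sum>q<m. W (r div n * m + p) (c div n * m + q) * C (p * n + r mod n) (q * n + c mod n))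
      = (\<Sum>l<m*n. \<Sum>P<k*m. \<Sum>Q<k*m. cnj (K l P r) * W P Q * K l Q c)"
    if r: "r < k * n" and c: "c < k * n" for r c
  proof -
    have n: "r mod n < n" "c mod n < n" and k: "r div n < k" "c div n < k"
      using block_pos_less r c by blast+
    define G where "G l p q = g l (p * n + r mod n) * W (r div n * m + p) (c div n * m + q)
                              * cnj (g l (q * n + c mod n))" for l p q
    have "(\<Sum>P<k*m. \<Sum>Q<k*m. cnj (K l P r) * W P Q * K l Q c) = (\<Sum>p<m. \<Sum>q<m. G l p q)" for l
    proof -
      have "(\<Sum>P<k*m. \<Sum>Q<k*m. cnj (K l P r) * W P Q * K l Q c)
          = (\<Sum>P<k*m. if P div m = r div n then \<Sum>Q<k*m. if Q div m = c div n then
               g l (P mod m * n + r mod n) * W P Q * cnj (g l (Q mod m * n + c mod n)) else 0 else 0)"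
        unfolding K_def by (auto intro!: sum.cong)
      also have "\<dots> = (\<Sum>p<m. \<Sum>q<m. G l p q)"
        unfolding G_def using k by (simp add: sum_block_select)
      finally show ?thesis .
    qed
    moreover have "(\<Sum>p<m. \<Sum>q<m. W (r div n * m + p) (c div n * m + q) * C (p * n + r mod n) (q * n + c mod n))
        = (\<Sum>p<m. \<Sum>q<m. \<Sum>l<m*n. G l p q)"
      unfolding G_def using n by (simp add: g block_index_less sum_distrib_left mult_ac)
    ultimately show ?thesis
      by (simp add: sum.swap[of _ "{..<m*n}"])
  qed
  have "psd_fun (k * n) (\<lambda>r c. \<Sum>l<m*n. \<Sum>P<k*m. \<Sum>Q<k*m. cnj (K l P r) * W P Q * K l Q c)"
    using W by (intro psd_fun_sum psd_fun_congruence)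
  then show ?thesis
    by (rule psd_fun_cong[THEN iffD2, rotated]) (rule entry)
qed

lemma adj_dim [simp]: "dim_row (adj A) = dim_col A" "dim_col (adj A) = dim_row A"
  unfolding adj_def by auto

lemma adj_index [simp]: "i < dim_col A \<Longrightarrow> j < dim_row A \<Longrightarrow> adj A $$ (i, j) = cnj (A $$ (j, i))"
  unfolding adj_def by auto

lemma block_mat_dim [simp]: "dim_row (block_mat k d F) = k * d" "dim_col (block_mat k d F) = k * d"
  unfolding block_mat_def by auto

lemma block_mat_carrier [simp]: "block_mat k d F \<in> carrier_mat (k * d) (k * d)"
  unfolding block_mat_def by simp

lemma block_mat_cong:
  "(\<And>i j. i < k \<Longrightarrow> j < k \<Longrightarrow> F i j = G i j) \<Longrightarrow> block_mat k d F = block_mat k d G"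
  unfolding block_mat_def by (intro cong_mat refl) (auto simp: less_mult_imp_div_less)

lemma block_mat_index:
  "r < k * d \<Longrightarrow> c < k * d \<Longrightarrow> block_mat k d F $$ (r, c) = F (r div d) (c div d) $$ (r mod d, c mod d)"
  unfolding block_mat_def by auto

lemma mat_unit_index: "p < m \<Longrightarrow> q < m \<Longrightarrow> mat_unit m i j $$ (p, q) = (if p = i \<and> q = j then 1 else 0)"
  unfolding mat_unit_def by simp

lemma mat_unit_carrier [simp]: "mat_unit m i j \<in> carrier_mat m m"
  unfolding mat_unit_def by simp

lemma psd_iff_psd_fun:
  assumes A: "A \<in> carrier_mat N N"
  shows "psd N A \<longleftrightarrow> psd_fun N (\<lambda>i j. A $$ (i, j))"
proof -
  have form: "map_vec cnj v \<bullet> (A *\<^sub>v v) = sesq_form N (\<lambda>i j. A $$ (i, j)) (\<lambda>i. v $ i) (\<lambda>i. v $ i)"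
    if "v \<in> carrier_vec N" for v
    using A that unfolding sesq_form_def
    by (simp add: scalar_prod_def mult_mat_vec_def row_def sum_distrib_left mult_ac atLeast0LessThan)
  have "sesq_form N B (\<lambda>i. vec N y $ i) (\<lambda>i. vec N y $ i) = sesq_form N B y y" for B y
    unfolding sesq_form_def by (intro sum.cong refl) simp
  then have "psd_fun N (\<lambda>i j. A $$ (i, j)) \<longleftrightarrow>
      (\<forall>v \<in> carrier_vec N. 0 \<le> sesq_form N (\<lambda>i j. A $$ (i, j)) (\<lambda>i. v $ i) (\<lambda>i. v $ i))"
    unfolding psd_fun_def by (metis vec_carrier)
  then show ?thesis
    using A unfolding psd_def Let_def by (simp add: form complex_nonneg_iff)
qed

lemma adj_diag_rep_index:
  assumes U: "U \<in> carrier_mat d d" and r: "r < k * d" and s: "s < k * d"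
  shows "adj (diag_rep k d U) $$ (r, s) = (if s div d = r div d then cnj (U $$ (s mod d, r mod d)) else 0)"
  using r s U block_pos_less[OF r] block_pos_less[OF s] by (simp add: diag_rep_def block_mat_index)

lemma adj_diag_rep_mult_block_mat:
  assumes U: "U \<in> carrier_mat d d" and F: "\<And>i j. i < k \<Longrightarrow> j < k \<Longrightarrow> F i j \<in> carrier_mat d d"
  shows "adj (diag_rep k d U) * block_mat k d F = block_mat k d (\<lambda>i j. adj U * F i j)"
proof (rule eq_matI)
  fix r c
  assume "r < dim_row (block_mat k d (\<lambda>i j. adj U * F i j))" "c < dim_col (block_mat k d (\<lambda>i j. adj U * F i j))"
  then have r: "r < k * d" and c: "c < k * d"
    by simp_all
  note pos = block_pos_less[OF r] block_pos_less[OF c]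
  have "(adj (diag_rep k d U) * block_mat k d F) $$ (r, c)
      = (\<Sum>s<k*d. adj (diag_rep k d U) $$ (r, s) * block_mat k d F $$ (s, c))"
    using r c by (simp add: diag_rep_def scalar_prod_def atLeast0LessThan del: adj_index)
  also have "\<dots> = (\<Sum>s<k*d. if s div d = r div d then cnj (U $$ (s mod d, r mod d)) * block_mat k d F $$ (s, c) else 0)"
    using U r by (intro sum.cong refl) (simp add: adj_diag_rep_index)
  also have "\<dots> = (\<Sum>t<d. cnj (U $$ (t, r mod d)) * F (r div d) (c div d) $$ (t, c mod d))"
    using pos c by (simp add: sum_block_select block_pos_less block_index_less block_mat_index)
  also have "\<dots> = block_mat k d (\<lambda>i j. adj U * F i j) $$ (r, c)"
    using r c pos U F[of "r div d" "c div d"] by (simp add: block_mat_index scalar_prod_def atLeast0LessThan)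
  finally show "(adj (diag_rep k d U) * block_mat k d F) $$ (r, c) = block_mat k d (\<lambda>i j. adj U * F i j) $$ (r, c)" .
qed (simp_all add: diag_rep_def)

lemma kron_one_adj:
  assumes U: "U \<in> carrier_mat n n"
  shows "kron m n (1\<^sub>m m) (adj U) = adj (diag_rep m n U)"
proof (rule eq_matI)
  fix r c
  assume "r < dim_row (adj (diag_rep m n U))" "c < dim_col (adj (diag_rep m n U))"
  then have r: "r < m * n" and c: "c < m * n"
    by (simp_all add: diag_rep_def)
  then show "kron m n (1\<^sub>m m) (adj U) $$ (r, c) = adj (diag_rep m n U) $$ (r, c)"
    using U block_pos_less[OF r] block_pos_less[OF c]
    by (auto simp: kron_def adj_diag_rep_index)
qed (simp_all add: kron_def diag_rep_def)

lemma choi_U_eq_block_mat: "choi_U m n UA \<psi> = block_mat m n (\<lambda>i j. \<psi> (UA * mat_unit m i j))"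
proof (rule eq_matI)
  fix r c
  assume "r < dim_row (block_mat m n (\<lambda>i j. \<psi> (UA * mat_unit m i j)))"
    "c < dim_col (block_mat m n (\<lambda>i j. \<psi> (UA * mat_unit m i j)))"
  then have r: "r < m * n" and c: "c < m * n"
    by simp_all
  note pos = block_pos_less[OF r] block_pos_less[OF c]
  have delta: "(if r div n = i \<and> c div n = j then 1 else 0) * x
      = (if j = c div n then if i = r div n then x else 0 else 0)" for i j and x :: complex
    by auto
  have "choi_U m n UA \<psi> $$ (r, c) = \<psi> (UA * mat_unit m (r div n) (c div n)) $$ (r mod n, c mod n)"
    using r c pos unfolding choi_U_def kron_def by (simp add: mat_unit_index delta)
  also have "\<dots> = block_mat m n (\<lambda>i j. \<psi> (UA * mat_unit m i j)) $$ (r, c)"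
    using r c by (simp add: block_mat_index)
  finally show "choi_U m n UA \<psi> $$ (r, c) = block_mat m n (\<lambda>i j. \<psi> (UA * mat_unit m i j)) $$ (r, c)" .
qed (simp_all add: choi_U_def)

lemma lin_map_entry_expansion:
  assumes L: "lin_map m n \<phi>" and X: "X \<in> carrier_mat m m" and s: "s < n" and t: "t < n"
  shows "\<phi> X $$ (s, t) = (\<Sum>p<m. \<Sum>q<m. X $$ (p, q) * \<phi> (mat_unit m p q) $$ (s, t))"
proof -
  have carrier: "\<And>A. A \<in> carrier_mat m m \<Longrightarrow> \<phi> A \<in> carrier_mat n n"
    and add: "\<And>A B. A \<in> carrier_mat m m \<Longrightarrow> B \<in> carrier_mat m m \<Longrightarrow> \<phi> (A + B) = \<phi> A + \<phi> B"
    and scale: "\<And>c A. A \<in> carrier_mat m m \<Longrightarrow> \<phi> (c \<cdot>\<^sub>m A) = c \<cdot>\<^sub>m \<phi> A"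
    using L unfolding lin_map_def by auto
  define X_on where "X_on S = mat m m (\<lambda>(p, q). if (p, q) \<in> S then X $$ (p, q) else 0)" for S
  have X_on_carrier: "X_on S \<in> carrier_mat m m" for S
    unfolding X_on_def by simp
  have partial: "\<phi> (X_on S) $$ (s, t) = (\<Sum>(p, q)\<in>S. X $$ (p, q) * \<phi> (mat_unit m p q) $$ (s, t))"
    if "finite S" "S \<subseteq> {..<m} \<times> {..<m}" for S
    using that
  proof (induction S rule: finite_induct)
    case empty
    have "X_on {} = 0 \<cdot>\<^sub>m X"
      unfolding X_on_def using X by auto
    then show ?case
      using scale X carrier[OF X] s t by simp
  next
    case (insert x S)
    obtain p q where x: "x = (p, q)" and pq: "p < m" "q < m"
      using insert.prems by (cases x) auto
    have "X_on (insert x S) = X_on S + X $$ (p, q) \<cdot>\<^sub>m mat_unit m p q"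
      unfolding X_on_def x using insert.hyps(2) x pq by (auto simp: mat_unit_def)
    then have "\<phi> (X_on (insert x S)) = \<phi> (X_on S) + X $$ (p, q) \<cdot>\<^sub>m \<phi> (mat_unit m p q)"
      using add scale X_on_carrier by simp
    then show ?case
      using insert carrier[OF X_on_carrier[of S]] carrier[OF mat_unit_carrier[of m p q]] s t x by auto
  qed
  have "X_on ({..<m} \<times> {..<m}) = X"
    unfolding X_on_def using X by auto
  then show ?thesis
    using partial[of "{..<m} \<times> {..<m}"] by (simp add: sum.cartesian_product)
qed

lemma lin_map_compose_mult:
  assumes L: "lin_map m n \<psi>" and A: "A \<in> carrier_mat m m" and B: "B \<in> carrier_mat n n"
  shows "lin_map m n (\<lambda>X. B * \<psi> (A * X))"
proof -
  have carrier: "\<And>X. X \<in> carrier_mat m m \<Longrightarrow> \<psi> X \<in> carrier_mat n n"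
    and add: "\<And>X Y. X \<in> carrier_mat m m \<Longrightarrow> Y \<in> carrier_mat m m \<Longrightarrow> \<psi> (X + Y) = \<psi> X + \<psi> Y"
    and scale: "\<And>c X. X \<in> carrier_mat m m \<Longrightarrow> \<psi> (c \<cdot>\<^sub>m X) = c \<cdot>\<^sub>m \<psi> X"
    using L unfolding lin_map_def by auto
  show ?thesis
    unfolding lin_map_def
  proof (intro conjI ballI allI)
    fix X Y :: "complex mat" assume X: "X \<in> carrier_mat m m" and Y: "Y \<in> carrier_mat m m"
    show "B * \<psi> (A * X) \<in> carrier_mat n n"
      using A B X carrier by auto
    have AX: "A * X \<in> carrier_mat m m" and AY: "A * Y \<in> carrier_mat m m"
      using A X Y by auto
    show "B * \<psi> (A * (X + Y)) = B * \<psi> (A * X) + B * \<psi> (A * Y)"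
      using A X Y add[OF AX AY] mult_add_distrib_mat[OF B carrier[OF AX] carrier[OF AY]]
      by (simp add: mult_add_distrib_mat)
  next
    fix c :: complex and X :: "complex mat" assume X: "X \<in> carrier_mat m m"
    have AX: "A * X \<in> carrier_mat m m"
      using A X by auto
    show "B * \<psi> (A * (c \<cdot>\<^sub>m X)) = c \<cdot>\<^sub>m (B * \<psi> (A * X))"
      using A X scale[OF AX] mult_smult_distrib[OF B carrier[OF AX]] by (simp add: mult_smult_distrib)
  qed
qed

definition cp_map :: "nat \<Rightarrow> nat \<Rightarrow> (complex mat \<Rightarrow> complex mat) \<Rightarrow> bool" where
  "cp_map m n \<phi> \<longleftrightarrow>
     (\<forall>k \<ge> 1. \<forall>W :: nat \<Rightarrow> nat \<Rightarrow> complex mat.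
        (\<forall>i<k. \<forall>j<k. W i j \<in> carrier_mat m m) \<longrightarrow>
        psd (k*m) (block_mat k m W) \<longrightarrow> psd (k*n) (block_mat k n (\<lambda>i j. \<phi> (W i j))))"

lemma psd_block_mat_mat_unit: "psd (m*m) (block_mat m m (mat_unit m))"
proof -
  define g where "g r = (if r div m = r mod m then 1 else 0 :: complex)" for r
  have "block_mat m m (mat_unit m) $$ (r, c) = g r * cnj (g c)" if "r < m*m" "c < m*m" for r c
    using that block_pos_less[OF that(1)] block_pos_less[OF that(2)]
    by (simp add: block_mat_index mat_unit_index g_def)
  then have "psd_fun (m*m) (\<lambda>r c. block_mat m m (mat_unit m) $$ (r, c))"
    by (rule psd_fun_cong[THEN iffD2, rotated, OF psd_fun_rank1])
  then show ?thesis
    by (simp add: psd_iff_psd_fun)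
qed

lemma cp_map_iff_psd_choi:
  assumes "0 < m" and L: "lin_map m n \<phi>"
  shows "cp_map m n \<phi> \<longleftrightarrow> psd (m*n) (block_mat m n (\<lambda>i j. \<phi> (mat_unit m i j)))"
proof
  assume "cp_map m n \<phi>"
  then show "psd (m*n) (block_mat m n (\<lambda>i j. \<phi> (mat_unit m i j)))"
    using \<open>0 < m\<close> psd_block_mat_mat_unit unfolding cp_map_def by auto
next
  assume choi: "psd (m*n) (block_mat m n (\<lambda>i j. \<phi> (mat_unit m i j)))"
  show "cp_map m n \<phi>"
    unfolding cp_map_def
  proof (intro allI impI)
    fix k W
    assume W: "\<forall>i<k. \<forall>j<k. W i j \<in> carrier_mat m m" and W_psd: "psd (k*m) (block_mat k m W)"
    have entry: "block_mat k n (\<lambda>i j. \<phi> (W i j)) $$ (r, c) = (\<Sum>p<m. \<Sum>q<m.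
        block_mat k m W $$ (r div n * m + p, c div n * m + q) *
        block_mat m n (\<lambda>i j. \<phi> (mat_unit m i j)) $$ (p * n + r mod n, q * n + c mod n))"
      if r: "r < k*n" and c: "c < k*n" for r c
      using r c block_pos_less[OF r] block_pos_less[OF c] W
      by (simp add: block_mat_index block_index_less lin_map_entry_expansion[OF L])
    have "psd_fun (k*n) (\<lambda>r c. \<Sum>p<m. \<Sum>q<m.
        block_mat k m W $$ (r div n * m + p, c div n * m + q) *
        block_mat m n (\<lambda>i j. \<phi> (mat_unit m i j)) $$ (p * n + r mod n, q * n + c mod n))"
      using choi W_psd by (intro psd_fun_block_contraction) (simp_all add: psd_iff_psd_fun)
    then have "psd_fun (k*n) (\<lambda>r c. block_mat k n (\<lambda>i j. \<phi> (W i j)) $$ (r, c))"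
      by (rule psd_fun_cong[THEN iffD2, rotated]) (rule entry)
    then show "psd (k*n) (block_mat k n (\<lambda>i j. \<phi> (W i j)))"
      by (simp add: psd_iff_psd_fun)
  qed
qed

lemma UCP_iff_cp_map:
  assumes UA: "unitary_mat m UA" and UB: "unitary_mat n UB" and L: "lin_map m n \<psi>"
  shows "UCP m n UA UB \<psi> \<longleftrightarrow> cp_map m n (\<lambda>X. adj UB * \<psi> (UA * X))"
proof -
  have UA_carrier: "UA \<in> carrier_mat m m" and UA_inv: "adj UA * UA = 1\<^sub>m m" "UA * adj UA = 1\<^sub>m m"
    and UB_carrier: "UB \<in> carrier_mat n n"
    using UA UB unfolding unitary_mat_def by auto
  have adj_UA_carrier: "adj UA \<in> carrier_mat m m"
    using UA_carrier by auto
  have \<psi>_carrier: "\<psi> X \<in> carrier_mat n n" if "X \<in> carrier_mat m m" for X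
    using L that unfolding lin_map_def by auto
  have cancel: "A * (B * X) = X" if "A * B = 1\<^sub>m m" "A \<in> carrier_mat m m" "B \<in> carrier_mat m m"
    "X \<in> carrier_mat m m" for A B X :: "complex mat"
    using that by (metis assoc_mult_mat left_mult_one_mat)
  have target: "adj (diag_rep k n UB) * block_mat k n (\<lambda>i j. \<psi> (V i j))
      = block_mat k n (\<lambda>i j. adj UB * \<psi> (V i j))" if "\<forall>i<k. \<forall>j<k. V i j \<in> carrier_mat m m" for k V
    using that by (intro adj_diag_rep_mult_block_mat UB_carrier \<psi>_carrier) auto
  show ?thesis
    unfolding UCP_def cp_map_def
  proof (intro iffI allI impI)
    fix k :: nat and W
    assume ucp: "\<forall>k\<ge>1. \<forall>V. (\<forall>i<k. \<forall>j<k. V i j \<in> carrier_mat m m) \<longrightarrow>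
        psd (k*m) (adj (diag_rep k m UA) * block_mat k m V) \<longrightarrow>
        psd (k*n) (adj (diag_rep k n UB) * block_mat k n (\<lambda>i j. \<psi> (V i j)))"
      and k: "k \<ge> 1" and W: "\<forall>i<k. \<forall>j<k. W i j \<in> carrier_mat m m" and W_psd: "psd (k*m) (block_mat k m W)"
    define V where "V i j = UA * W i j" for i j
    have V: "\<forall>i<k. \<forall>j<k. V i j \<in> carrier_mat m m"
      using W UA_carrier unfolding V_def by auto
    have "adj (diag_rep k m UA) * block_mat k m V = block_mat k m W"
      using V W UA_carrier adj_UA_carrier UA_inv unfolding V_def
      by (auto simp: adj_diag_rep_mult_block_mat cancel intro!: block_mat_cong)
    then have "psd (k*n) (adj (diag_rep k n UB) * block_mat k n (\<lambda>i j. \<psi> (V i j)))"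
      using ucp k V W_psd by simp
    then show "psd (k*n) (block_mat k n (\<lambda>i j. adj UB * \<psi> (UA * W i j)))"
      using target[OF V] unfolding V_def by simp
  next
    fix k :: nat and V
    assume cp: "\<forall>k\<ge>1. \<forall>W. (\<forall>i<k. \<forall>j<k. W i j \<in> carrier_mat m m) \<longrightarrow>
        psd (k*m) (block_mat k m W) \<longrightarrow> psd (k*n) (block_mat k n (\<lambda>i j. adj UB * \<psi> (UA * W i j)))"
      and k: "k \<ge> 1" and V: "\<forall>i<k. \<forall>j<k. V i j \<in> carrier_mat m m"
      and V_psd: "psd (k*m) (adj (diag_rep k m UA) * block_mat k m V)"
    define W where "W i j = adj UA * V i j" for i j
    have W: "\<forall>i<k. \<forall>j<k. W i j \<in> carrier_mat m m"
      using V adj_UA_carrier unfolding W_def by auto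
    have "adj (diag_rep k m UA) * block_mat k m V = block_mat k m W"
      using V UA_carrier unfolding W_def by (simp add: adj_diag_rep_mult_block_mat)
    then have "psd (k*n) (block_mat k n (\<lambda>i j. adj UB * \<psi> (UA * W i j)))"
      using cp k W V_psd by simp
    moreover have "block_mat k n (\<lambda>i j. adj UB * \<psi> (UA * W i j)) = block_mat k n (\<lambda>i j. adj UB * \<psi> (V i j))"
      using V UA_carrier adj_UA_carrier UA_inv unfolding W_def by (auto simp: cancel intro!: block_mat_cong)
    ultimately show "psd (k*n) (adj (diag_rep k n UB) * block_mat k n (\<lambda>i j. \<psi> (V i j)))"
      using target[OF V] by simp
  qed
qed

theorem theorem3p4:
  fixes m n :: nat and UA UB :: "complex mat" and \<psi> :: "complex mat \<Rightarrow> complex mat"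
  assumes "m \<ge> 1" and "n \<ge> 1"
    and "unitary_mat m UA" and "unitary_mat n UB"
    and "lin_map m n \<psi>"
  shows "UCP m n UA UB \<psi> \<longleftrightarrow> psd (m*n) (kron m n (1\<^sub>m m) (adj UB) * choi_U m n UA \<psi>)"
proof -
  (* m \<ge> 1 makes the block matrix [e_ij] an admissible test input (UCP only quantifies over
     k \<ge> 1). *)
  have UA: "UA \<in> carrier_mat m m" and UB: "UB \<in> carrier_mat n n"
    using assms(3,4) unfolding unitary_mat_def by auto
  have "kron m n (1\<^sub>m m) (adj UB) * choi_U m n UA \<psi>
      = block_mat m n (\<lambda>i j. adj UB * \<psi> (UA * mat_unit m i j))"
    using assms(5) UA unfolding kron_one_adj[OF UB] choi_U_eq_block_mat lin_map_def
    by (intro adj_diag_rep_mult_block_mat UB) auto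
  moreover have "lin_map m n (\<lambda>X. adj UB * \<psi> (UA * X))"
    using assms(5) UA UB by (intro lin_map_compose_mult) auto
  ultimately show ?thesis
    using UCP_iff_cp_map[OF assms(3-5)] cp_map_iff_psd_choi assms(1) by simp
qed

end
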